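(* Let $S$ be a numerical semigroup with minimal generators $e<a_1<\dots<a_t$, and let $s\in S$. If $(x_0,x_1,\dots,x_t)$ is a $B^{\mathcal D}$-factorization of ${\rm adj}(s)$ of length at most ${\rm ord}(s;S)$, then $x_0=0$.
   Context: A numerical semigroup is a submonoid of $(\mathbb N,+)$ with finite complement. An $S$-factorization of $n$ is $(c_0,\dots,c_t)\in\mathbb N^{t+1}$ with $c_0e+\sum c_ia_i=n$, of length $\sum c_i$. ${\rm ord}(n;S)$ is the maximal such length. Let $d_i=a_i-e$, $B=\langle e,d_1,\dots,d_t\rangle$, $\mathcal D=(e,d_1,\dots,d_t)$. A $B^{\mathcal D}$-factorization of $b$ is $(x_0,\dots,x_t)\in\mathbb N^{t+1}$ with $x_0e+\sum x_id_i=b$, of length $\sum x_i$. The adjustment of $s$ is ${\rm adj}(s)=s-{\rm ord}(s;S)e$. *)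

theory Defs
  imports Main
begin

definition numerical_semigroup :: "nat set \<Rightarrow> bool" where
  "numerical_semigroup S \<longleftrightarrow> 0 \<in> S \<and> (\<forall>x\<in>S. \<forall>y\<in>S. x + y \<in> S) \<and> finite (UNIV - S)"

inductive_set monoid_gen :: "nat set \<Rightarrow> nat set" for G where
  zero: "0 \<in> monoid_gen G"
| gen: "g \<in> G \<Longrightarrow> x \<in> monoid_gen G \<Longrightarrow> g + x \<in> monoid_gen G"

definition minimal_generating_set :: "nat set \<Rightarrow> nat set \<Rightarrow> bool" where
  "minimal_generating_set S G \<longleftrightarrow> monoid_gen G = S \<and> (\<forall>H. H \<subset> G \<longrightarrow> monoid_gen H \<noteq> S)"

definition S_fact_lengths :: "nat \<Rightarrow> (nat \<Rightarrow> nat) \<Rightarrow> nat \<Rightarrow> nat \<Rightarrow> nat set" where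
  "S_fact_lengths e a t n =
     {\<Sum>i\<in>{0..t}. c i | c. c 0 * e + (\<Sum>i\<in>{1..t}. c i * a i) = n}"

definition ord_S :: "nat \<Rightarrow> (nat \<Rightarrow> nat) \<Rightarrow> nat \<Rightarrow> nat \<Rightarrow> nat" where
  "ord_S e a t n = Max (S_fact_lengths e a t n)"

definition adj :: "nat \<Rightarrow> (nat \<Rightarrow> nat) \<Rightarrow> nat \<Rightarrow> nat \<Rightarrow> nat" where
  "adj e a t s = s - ord_S e a t s * e"

text \<open>x is a B^D-factorization of b, D = (e, a 1 - e, ..., a t - e).\<close>
definition BD_factorization :: "nat \<Rightarrow> (nat \<Rightarrow> nat) \<Rightarrow> nat \<Rightarrow> nat \<Rightarrow> (nat \<Rightarrow> nat) \<Rightarrow> bool" where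
  "BD_factorization e a t b x \<longleftrightarrow> x 0 * e + (\<Sum>i\<in>{1..t}. x i * (a i - e)) = b"

definition fact_length :: "nat \<Rightarrow> (nat \<Rightarrow> nat) \<Rightarrow> nat" where
  "fact_length t x = (\<Sum>i\<in>{0..t}. x i)"

end

theory Submission
  imports Defs
begin

text \<open>Since \<open>a\<^sub>i = e + d\<^sub>i\<close>, a \<open>B\<^sup>\<D>\<close>-factorization \<open>x\<close> of \<open>adj(s)\<close> with
  \<open>x\<^sub>1 + \<dots> + x\<^sub>t \<le> ord(s;S)\<close> lifts to an \<open>S\<close>-factorization of \<open>s = adj(s) + ord(s;S)\<cdot>e\<close>:
  each \<open>d\<^sub>i\<close> absorbs one of the \<open>ord(s;S)\<close> copies of \<open>e\<close> into an \<open>a\<^sub>i\<close>, and the remaining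
  copies join the \<open>x\<^sub>0\<close> copies of \<open>e\<close>. Its length is \<open>ord(s;S) + x\<^sub>0\<close>, so maximality of
  \<open>ord(s;S)\<close> forces \<open>x\<^sub>0 = 0\<close>.\<close>

lemma monoid_gen_mono: "H \<subseteq> G \<Longrightarrow> monoid_gen H \<subseteq> monoid_gen G"
proof
  fix y assume "H \<subseteq> G" and "y \<in> monoid_gen H"
  from this(2) show "y \<in> monoid_gen G"
    by induction (use \<open>H \<subseteq> G\<close> in \<open>auto intro: monoid_gen.intros\<close>)
qed

lemma monoid_gen_Diff_zero: "monoid_gen (G - {0}) = monoid_gen G"
proof
  show "monoid_gen G \<subseteq> monoid_gen (G - {0})"
  proof
    fix y assume "y \<in> monoid_gen G"
    then show "y \<in> monoid_gen (G - {0})"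
    proof induction
      case zero
      then show ?case by (rule monoid_gen.zero)
    next
      case (gen g x)
      then show ?case by (cases "g = 0") (auto intro: monoid_gen.gen)
    qed
  qed
qed (rule monoid_gen_mono, blast)

lemma minimal_generating_set_zero_notin:
  assumes "minimal_generating_set S G"
  shows "0 \<notin> G"
proof
  assume "0 \<in> G"
  then have "G - {0} \<subset> G" by blast
  with assms show False
    unfolding minimal_generating_set_def using monoid_gen_Diff_zero by metis
qed

lemma S_fact_lengths_le:
  assumes "e > 0" and "\<forall>i\<in>{1..t}. a i > 0" and "l \<in> S_fact_lengths e a t n"
  shows "l \<le> n"
proof -
  obtain c where l: "l = (\<Sum>i\<in>{0..t}. c i)"
    and n: "c 0 * e + (\<Sum>i\<in>{1..t}. c i * a i) = n"
    using assms(3) unfolding S_fact_lengths_def by auto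
  have "l = c 0 + (\<Sum>i\<in>{1..t}. c i)"
    using l by (simp add: sum.atLeast_Suc_atMost)
  also have "c 0 \<le> c 0 * e"
    using assms(1) by simp
  also have "(\<Sum>i\<in>{1..t}. c i) \<le> (\<Sum>i\<in>{1..t}. c i * a i)"
  proof (rule sum_mono)
    fix i assume "i \<in> {1..t}"
    with assms(2) have "a i > 0" by blast
    then show "c i \<le> c i * a i" by simp
  qed
  finally show ?thesis
    using n by simp
qed

lemma le_ord_S:
  assumes "e > 0" and "\<forall>i\<in>{1..t}. a i > 0" and "l \<in> S_fact_lengths e a t n"
  shows "l \<le> ord_S e a t n"
proof -
  have "finite (S_fact_lengths e a t n)"
    using S_fact_lengths_le[OF assms(1,2)] by (meson finite_atMost atMost_iff finite_subset subsetI)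
  then show ?thesis
    unfolding ord_S_def using assms(3) by (rule Max_ge)
qed

lemma BD_factorization_padded_length_in_S_fact_lengths:
  assumes "\<forall>i\<in>{1..t}. e \<le> a i"
    and "BD_factorization e a t b x"
    and "(\<Sum>i\<in>{1..t}. x i) \<le> m"
  shows "m + x 0 \<in> S_fact_lengths e a t (b + m * e)"
proof -
  define X where "X = (\<Sum>i\<in>{1..t}. x i)"
  define c where "c = (\<lambda>i. if i = 0 then m - X + x 0 else x i)"
  have c_tail: "(\<Sum>i\<in>{1..t}. f i (c i)) = (\<Sum>i\<in>{1..t}. f i (x i))" for f :: "nat \<Rightarrow> nat \<Rightarrow> nat"
    unfolding c_def by (rule sum.cong) auto
  have "(\<Sum>i\<in>{1..t}. x i * a i) = (\<Sum>i\<in>{1..t}. x i * (a i - e)) + X * e"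
    unfolding X_def sum_distrib_right sum.distrib[symmetric]
    using assms(1) by (intro sum.cong) (simp_all add: algebra_simps)
  moreover have "c 0 * e + X * e = m * e + x 0 * e"
    using assms(3) unfolding c_def X_def[symmetric] by (simp flip: distrib_right)
  ultimately have "c 0 * e + (\<Sum>i\<in>{1..t}. c i * a i) = b + m * e"
    using assms(2) c_tail[of "\<lambda>i y. y * a i"] unfolding BD_factorization_def by simp
  moreover have "(\<Sum>i\<in>{0..t}. c i) = m + x 0"
    using assms(3) c_tail[of "\<lambda>_ y. y"]
    by (simp add: sum.atLeast_Suc_atMost X_def c_def)
  ultimately show ?thesis
    unfolding S_fact_lengths_def by force
qed

theorem lemma3p2:
  fixes S :: "nat set" and e t s :: nat and a x :: "nat \<Rightarrow> nat"
  assumes "numerical_semigroup S"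
    and "minimal_generating_set S (insert e (a ` {1..t}))"
    and "\<forall>i\<in>{1..t}. e < a i"
    and "\<forall>i\<in>{1..t}. \<forall>j\<in>{1..t}. i < j \<longrightarrow> a i < a j"
    and "s \<in> S"
    and "BD_factorization e a t (adj e a t s) x"
    and "fact_length t x \<le> ord_S e a t s"
  shows "x 0 = 0"
proof (rule ccontr)
  assume "x 0 \<noteq> 0"
  have "e > 0"
    using minimal_generating_set_zero_notin[OF assms(2)] by (simp add: gr0I)
  have tail_le: "(\<Sum>i\<in>{1..t}. x i) \<le> ord_S e a t s"
    using assms(7) by (simp add: fact_length_def sum.atLeast_Suc_atMost)
  have "adj e a t s > 0"
  proof -
    have "0 < x 0 * e + (\<Sum>i\<in>{1..t}. x i * (a i - e))"
      using \<open>x 0 \<noteq> 0\<close> \<open>e > 0\<close> by simp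
    also have "\<dots> = adj e a t s"
      using assms(6) unfolding BD_factorization_def .
    finally show ?thesis .
  qed
  then have s_eq: "adj e a t s + ord_S e a t s * e = s"
    unfolding adj_def by simp
  have "\<forall>i\<in>{1..t}. e \<le> a i" and a_pos: "\<forall>i\<in>{1..t}. a i > 0"
    using assms(3) by auto
  from BD_factorization_padded_length_in_S_fact_lengths[OF this(1) assms(6) tail_le]
  have lifted: "ord_S e a t s + x 0 \<in> S_fact_lengths e a t s"
    by (simp only: s_eq)
  from le_ord_S[OF \<open>e > 0\<close> a_pos lifted]
  have "ord_S e a t s + x 0 \<le> ord_S e a t s" .
  with \<open>x 0 \<noteq> 0\<close> show False by simp
qed

end
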